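(* Assume (A.1)–(A.6), and assume moreover that the stochastic function values have bounded variance: $\mathbb{E}_{\xi_t}|f(x_t;\xi_t)-f(x_t)|^2\le\sigma_f^2$ for all $t$. Run the SG-SAV iteration with $r_0=\sqrt{f(x_0)+c}$ for $T\ge1$ steps, and suppose the learning rate $\eta>0$ satisfies $$C_1\sqrt\eta+C_2\eta+C_3\le0,$$ where, with $F(x_0):=\sqrt{f(x_0)+c}$, $$C_1=F(x_0)\sqrt{T\Big(\frac{\gamma^2}{8a^3}\sigma_f^2+\frac1{2a}\sigma_0^2\Big)},\qquad C_2=\frac{L_F\,F(x_0)^2}{2},\qquad C_3=\frac{\sigma_f}{2\sqrt a}-\frac{\sqrt a}{2}.$$ Then $\mathbb{E}[r_T]\ge\frac{\sqrt a}{2}>0$.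
   Context: Let $f:\mathbb{R}^d\to\mathbb{R}$ be continuously differentiable and let $c\ge0$ be a constant with $f^*:=\inf_{x}f(x)>-c$. Let $\xi_0,\xi_1,\dots$ be random variables (mini-batch samples). For each $x\in\mathbb{R}^d$ and sample $\xi$, let $f(x;\xi)\in\mathbb{R}$ be a stochastic function value and $G(x;\xi)\in\mathbb{R}^d$ a stochastic gradient. Write $G_t:=G(x_t;\xi_t)$ and $\tilde F_t:=\sqrt{f(x_t;\xi_t)+c}$. Given $x_0\in\mathbb{R}^d$, a scalar $r_0$ and a learning rate $\eta>0$, the SG-SAV iteration defines $(x_{t+1},r_{t+1})$ for $t\ge0$ as the solution of the (linear) system $$x_{t+1}=x_t-\eta\,\frac{r_{t+1}}{\tilde F_t}\,G_t,\qquad r_{t+1}=r_t+\frac{1}{2\tilde F_t}\langle G_t,\,x_{t+1}-x_t\rangle .$$ Assumptions: (A.1) the $\xi_t$ are mutually independent and independent of $x_t$; (A.2) $\mathbb{E}_{\xi_t}[G_t]=\nabla f(x_t)$ and $\mathbb{E}_{\xi_t}[f(x_t;\xi_t)]=f(x_t)$, where $\mathbb{E}_{\xi_t}$ is expectation over $\xi_t$ conditioned on $\xi_0,\dots,\xi_{t-1}$; (A.3) there is $\sigma_0$ with $\mathbb{E}_{\xi_t}\|G(x_t;\xi_t)-\nabla f(x_t)\|^2\le\sigma_0^2$ for all $t$; (A.4) there are constants $0<a\le B$ with $a\le f(x)+c\le B$ and $a\le f(x;\xi)+c\le B$ for all $x,\xi$; (A.5) there is $\gamma$ with $\|\nabla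 f(x)\|^2\le\gamma^2$ for all $x$; (A.6) $\nabla f$ is $L$-Lipschitz. Let $F(x):=\sqrt{f(x)+c}$, $F_*:=\sqrt{f^*+c}$, and $L_F:=\frac{1}{2F_*}\Big(L+\frac{\gamma^2}{2F_*^2}\Big)$ (a Lipschitz constant of $\nabla F$). *)

theory Defs
  imports "HOL-Probability.Probability"
begin

text \<open>History sigma-algebra generated by the samples xi_0, ..., xi_(t-1).
  Conditional expectation given it is the paper's E_{xi_t}.\<close>
definition hist_alg :: "'w measure \<Rightarrow> 'b measure \<Rightarrow> (nat \<Rightarrow> 'w \<Rightarrow> 'b) \<Rightarrow> nat \<Rightarrow> 'w measure" where
  "hist_alg M S xi t =
     sigma (space M) {xi i -` A \<inter> space M | i A. i < t \<and> A \<in> sets S}"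

definition Fstar :: "('a \<Rightarrow> real) \<Rightarrow> real \<Rightarrow> real" where
  "Fstar f c = sqrt ((INF x. f x) + c)"

definition LF :: "('a \<Rightarrow> real) \<Rightarrow> real \<Rightarrow> real \<Rightarrow> real \<Rightarrow> real" where
  "LF f c L \<gamma> = (1 / (2 * Fstar f c)) * (L + \<gamma>\<^sup>2 / (2 * (Fstar f c)\<^sup>2))"

end

theory Submission
  imports Defs
begin

text \<open>
  Along every sample path the SAV variable r tracks F = sqrt (f + c) from below.  The descent
  lemma for F, whose gradient is L_F-Lipschitz, and the SAV update give
  F(x_{t+1}) - r_{t+1} \<le> F(x_t) - r_t + <e_t, x_{t+1} - x_t> + L_F/2 |x_{t+1} - x_t|^2,
  where e_t is the error of the normalised stochastic gradient, while the update itself gives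
  |x_{t+1} - x_t|^2 \<le> \<eta> (r_t^2 - r_{t+1}^2).  Young's inequality with a free weight l > 0
  and telescoping yield
  r_T \<ge> sqrt a - (l + L_F)/2 \<eta> r_0^2 - \<Sum>_t |e_t|^2 / (2 l),
  and the two variance bounds give E |e_t|^2 \<le> \<kappa> := \<gamma>^2 \<sigma>_f^2 / (8 a^3) + \<sigma>_0^2 / (2 a).
  Taking expectations and optimising over l gives
  E r_T \<ge> sqrt a - L_F/2 \<eta> r_0^2 - r_0 sqrt (T \<kappa> \<eta>),
  which the learning-rate condition bounds below by sqrt a / 2.  As the error term is absorbed
  by Young's inequality rather than cancelled in expectation, neither unbiasedness (A.2) nor
  independence (A.1) is needed.
\<close>

lemma lipschitz_of_gradient_bound:
  fixes f :: "'a::real_inner \<Rightarrow> real"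
  assumes grad: "\<And>y. (f has_derivative (\<lambda>h. gradf y \<bullet> h)) (at y)"
    and bound: "\<And>y. norm (gradf y) \<le> G"
  shows "\<bar>f y - f z\<bar> \<le> G * norm (y - z)"
proof -
  have "norm (f y - f z) \<le> G * norm (y - z)"
  proof (rule differentiable_bound[where S=UNIV and f'="\<lambda>y h. gradf y \<bullet> h"])
    fix w :: 'a
    show "(f has_derivative (\<lambda>h. gradf w \<bullet> h)) (at w within UNIV)" using grad by simp
    have "onorm (\<lambda>h. gradf w \<bullet> h) \<le> norm (gradf w)"
      by (rule onorm_bound) (auto simp: Cauchy_Schwarz_ineq2)
    then show "onorm (\<lambda>h. gradf w \<bullet> h) \<le> G" using bound order_trans by blast
  qed auto
  then show ?thesis by simp
qed

lemma inner_le_weighted_squares: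
  fixes u v :: "'a::real_inner"
  assumes "0 < l"
  shows "u \<bullet> v \<le> (norm u)\<^sup>2 / (2 * l) + l * (norm v)\<^sup>2 / 2"
proof -
  have "l * (u \<bullet> v) = ((norm u)\<^sup>2 + l\<^sup>2 * (norm v)\<^sup>2 - (norm (u - l *\<^sub>R v))\<^sup>2) / 2"
    using dot_norm_neg[of u "l *\<^sub>R v"] by (simp add: power_mult_distrib)
  then have "u \<bullet> v = ((norm u)\<^sup>2 + l\<^sup>2 * (norm v)\<^sup>2 - (norm (u - l *\<^sub>R v))\<^sup>2) / (2 * l)"
    using assms by (simp add: field_simps)
  also have "\<dots> \<le> ((norm u)\<^sup>2 + l\<^sup>2 * (norm v)\<^sup>2) / (2 * l)"
    using assms by (intro divide_right_mono) auto
  also have "\<dots> = (norm u)\<^sup>2 / (2 * l) + l * (norm v)\<^sup>2 / 2"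
    using assms by (simp add: field_simps power2_eq_square)
  finally show ?thesis .
qed

lemma norm_diff_scaleR_inverse_sqrt_le:
  fixes u v :: "'a::real_normed_vector" and P Q s :: real
  assumes s: "0 < s" and P: "s\<^sup>2 \<le> P" and Q: "s\<^sup>2 \<le> Q"
  shows "norm ((1 / (2 * sqrt P)) *\<^sub>R u - (1 / (2 * sqrt Q)) *\<^sub>R v)
         \<le> norm (u - v) / (2 * s) + norm u * \<bar>P - Q\<bar> / (4 * s ^ 3)"
proof -
  define p q where "p = sqrt P" and "q = sqrt Q"
  have sp: "s \<le> p" and sq: "s \<le> q"
    using real_sqrt_le_mono[OF P] real_sqrt_le_mono[OF Q] s by (simp_all add: p_def q_def)
  have pq: "0 < p" "0 < q" using sp sq s by linarith+
  have sq_pq: "p\<^sup>2 = P" "q\<^sup>2 = Q"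
    using P Q s unfolding p_def q_def by (simp_all add: order_trans[OF zero_le_power2])
  have diff: "\<bar>P - Q\<bar> = \<bar>q - p\<bar> * (p + q)"
  proof -
    have "P - Q = (p - q) * (p + q)"
      unfolding sq_pq[symmetric] by (simp add: algebra_simps power2_eq_square)
    then show ?thesis using pq by (simp add: abs_mult abs_minus_commute)
  qed
  have "norm ((1 / (2 * p)) *\<^sub>R u - (1 / (2 * q)) *\<^sub>R v)
      = norm ((1 / (2 * q)) *\<^sub>R (u - v) + ((q - p) / (2 * p * q)) *\<^sub>R u)"
    using pq by (simp add: field_simps scaleR_diff_right flip: scaleR_add_left)
  also have "\<dots> \<le> norm ((1 / (2 * q)) *\<^sub>R (u - v)) + norm (((q - p) / (2 * p * q)) *\<^sub>R u)"
    by (rule norm_triangle_ineq)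
  also have "\<dots> = norm (u - v) / (2 * q) + \<bar>q - p\<bar> * norm u / (2 * p * q)"
    using pq by (simp add: abs_mult)
  also have "\<dots> \<le> norm (u - v) / (2 * s) + \<bar>P - Q\<bar> * norm u / (2 * p * q * (p + q))"
  proof (rule add_mono)
    show "norm (u - v) / (2 * q) \<le> norm (u - v) / (2 * s)"
      using s sq by (intro divide_left_mono) auto
    show "\<bar>q - p\<bar> * norm u / (2 * p * q) \<le> \<bar>P - Q\<bar> * norm u / (2 * p * q * (p + q))"
    proof -
      have "\<bar>P - Q\<bar> * norm u / (2 * p * q * (p + q))
          = (\<bar>q - p\<bar> * norm u) * (p + q) / ((2 * p * q) * (p + q))"
        unfolding diff by (simp add: ac_simps)
      also have "\<dots> = \<bar>q - p\<bar> * norm u / (2 * p * q)"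
        using pq by (intro nonzero_mult_divide_mult_cancel_right) simp
      finally show ?thesis by simp
    qed
  qed
  also have "\<dots> \<le> norm (u - v) / (2 * s) + norm u * \<bar>P - Q\<bar> / (4 * s ^ 3)"
  proof -
    have "2 * s * s * (s + s) \<le> 2 * p * q * (p + q)"
      using s sp sq by (intro mult_mono add_mono) auto
    then have "\<bar>P - Q\<bar> * norm u / (2 * p * q * (p + q)) \<le> \<bar>P - Q\<bar> * norm u / (2 * s * s * (s + s))"
      using s pq by (intro divide_left_mono mult_pos_pos add_pos_pos) auto
    also have "\<dots> = norm u * \<bar>P - Q\<bar> / (4 * s ^ 3)"
      by (simp add: power3_eq_cube ac_simps)
    finally show ?thesis by simp
  qed
  finally show ?thesis unfolding p_def q_def .
qed

lemma Fstar_bounds: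
  fixes f :: "'a \<Rightarrow> real"
  assumes low: "\<And>y. a \<le> f y + c" and a: "0 < a"
  shows "sqrt a \<le> Fstar f c" and "(Fstar f c)\<^sup>2 \<le> f y + c"
proof -
  have bdd: "bdd_below (range f)"
    using low by (intro bdd_belowI2[where m="a - c"]) (auto simp: algebra_simps)
  have inf: "a \<le> (INF x. f x) + c"
    using low by (simp add: cINF_greatest flip: diff_le_eq)
  then show "sqrt a \<le> Fstar f c" unfolding Fstar_def by simp
  have "(INF x. f x) \<le> f y" by (rule cINF_lower[OF bdd]) simp
  then show "(Fstar f c)\<^sup>2 \<le> f y + c" unfolding Fstar_def using inf a by simp
qed

lemma Fstar_pos: "(\<And>y. a \<le> f y + c) \<Longrightarrow> 0 < a \<Longrightarrow> 0 < Fstar f c"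
  using Fstar_bounds(1) by (metis less_le_trans real_sqrt_gt_0_iff)

lemma has_derivative_sqrt_shift:
  assumes deriv: "(f has_derivative (\<lambda>h. gradf y \<bullet> h)) (at y)" and pos: "0 < f y + c"
  shows "((\<lambda>y. sqrt (f y + c)) has_derivative
           (\<lambda>h. ((1 / (2 * sqrt (f y + c))) *\<^sub>R gradf y) \<bullet> h)) (at y)"
proof -
  have "((\<lambda>y. sqrt (f y + c)) has_derivative
          (\<lambda>h. (gradf y \<bullet> h) * (inverse (sqrt (f y + c)) / 2))) (at y)"
    using DERIV_real_sqrt[OF pos] has_derivative_add_const[OF deriv]
    by (rule DERIV_compose_FDERIV)
  then show ?thesis
    by (rule has_derivative_eq_rhs) (auto simp: fun_eq_iff divide_simps)
qed

lemma gradient_sqrt_shift_lipschitz: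
  fixes f :: "'a::real_inner \<Rightarrow> real"
  assumes grad: "\<And>y. (f has_derivative (\<lambda>h. gradf y \<bullet> h)) (at y)"
    and grad_bound: "\<And>y. (norm (gradf y))\<^sup>2 \<le> \<gamma>\<^sup>2"
    and grad_lip: "\<And>y z. norm (gradf y - gradf z) \<le> L * norm (y - z)"
    and low: "\<And>y. a \<le> f y + c" and a: "0 < a"
  shows "norm ((1 / (2 * sqrt (f y + c))) *\<^sub>R gradf y - (1 / (2 * sqrt (f z + c))) *\<^sub>R gradf z)
         \<le> LF f c L \<gamma> * norm (y - z)"
proof -
  define s where "s = Fstar f c"
  have s: "0 < s" unfolding s_def using Fstar_pos low a .
  have norm_grad: "norm (gradf w) \<le> \<bar>\<gamma>\<bar>" for w
    using grad_bound[of w] abs_le_square_iff[of "norm (gradf w)" \<gamma>] by simp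
  have f_diff: "\<bar>(f y + c) - (f z + c)\<bar> \<le> \<bar>\<gamma>\<bar> * norm (y - z)"
    using lipschitz_of_gradient_bound[OF grad norm_grad] by simp
  have "norm ((1 / (2 * sqrt (f y + c))) *\<^sub>R gradf y - (1 / (2 * sqrt (f z + c))) *\<^sub>R gradf z)
      \<le> norm (gradf y - gradf z) / (2 * s) + norm (gradf y) * \<bar>(f y + c) - (f z + c)\<bar> / (4 * s ^ 3)"
    using s Fstar_bounds(2)[OF low a] unfolding s_def
    by (intro norm_diff_scaleR_inverse_sqrt_le) auto
  also have "\<dots> \<le> L * norm (y - z) / (2 * s) + \<bar>\<gamma>\<bar> * (\<bar>\<gamma>\<bar> * norm (y - z)) / (4 * s ^ 3)"
    using s grad_lip[of y z] norm_grad[of y] f_diff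
    by (intro add_mono divide_right_mono mult_mono) auto
  also have "\<dots> = LF f c L \<gamma> * norm (y - z)"
    using s unfolding LF_def s_def[symmetric]
    by (simp add: field_simps power2_eq_square power3_eq_cube)
  finally show ?thesis .
qed

lemma descent_lemma:
  fixes g :: "'a::real_inner \<Rightarrow> real"
  assumes deriv: "\<And>y. (g has_derivative (\<lambda>h. dg y \<bullet> h)) (at y)"
    and lip: "\<And>y z. norm (dg y - dg z) \<le> K * norm (y - z)"
  shows "g y \<le> g z + dg z \<bullet> (y - z) + K / 2 * (norm (y - z))\<^sup>2"
proof -
  define d where "d = y - z"
  define p where "p s = z + s *\<^sub>R d" for s :: real
  define h where "h s = g (p s) - s * (dg z \<bullet> d) - K / 2 * s\<^sup>2 * (norm d)\<^sup>2" for s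
  have gp: "((\<lambda>s. g (p s)) has_field_derivative (dg (p s) \<bullet> d)) (at s)" for s
  proof -
    have "(p has_derivative (\<lambda>t. t *\<^sub>R d)) (at s)"
      unfolding p_def by (auto intro!: derivative_eq_intros)
    from has_derivative_compose[OF this deriv]
    show ?thesis by (simp add: has_field_derivative_def mult_commute_abs)
  qed
  have h': "DERIV h s :> dg (p s) \<bullet> d - dg z \<bullet> d - K * s * (norm d)\<^sup>2" for s
    unfolding h_def by (rule derivative_eq_intros gp refl | simp)+
  have "h 1 \<le> h 0"
  proof (rule DERIV_nonpos_imp_nonincreasing[of 0 1 h])
    fix s :: real assume s: "0 \<le> s" "s \<le> 1"
    have "dg (p s) \<bullet> d - dg z \<bullet> d \<le> norm (dg (p s) - dg z) * norm d"
      using Cauchy_Schwarz_ineq2[of "dg (p s) - dg z" d] by (simp add: inner_diff_left)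
    also have "\<dots> \<le> K * norm (p s - z) * norm d"
      using lip by (intro mult_right_mono) auto
    also have "\<dots> = K * s * (norm d)\<^sup>2"
      using s unfolding p_def by (simp add: power2_eq_square)
    finally show "\<exists>y. DERIV h s :> y \<and> y \<le> 0" using h' by fastforce
  qed simp
  then show ?thesis unfolding h_def p_def d_def by simp
qed

lemma sav_step:
  fixes g x x' :: "'a::real_inner" and r r' F \<eta> :: real
  assumes F: "0 < F" and \<eta>: "0 < \<eta>"
    and x': "x' = x - (\<eta> * r' / F) *\<^sub>R g"
    and r': "r' = r + (1 / (2 * F)) * (g \<bullet> (x' - x))"
  shows "r' = r / (1 + \<eta> * (norm g)\<^sup>2 / (2 * F\<^sup>2))"
    and "(norm (x' - x))\<^sup>2 \<le> \<eta> * (r\<^sup>2 - r'\<^sup>2)"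
    and "\<bar>r'\<bar> \<le> \<bar>r\<bar>"
proof -
  define q where "q = 1 + \<eta> * (norm g)\<^sup>2 / (2 * F\<^sup>2)"
  have q: "1 \<le> q" unfolding q_def using \<eta> by simp
  have dx: "x' - x = - ((\<eta> * r' / F) *\<^sub>R g)" using x' by simp
  have "r - r' = - (1 / (2 * F)) * (g \<bullet> (x' - x))" using r' by simp
  also have "g \<bullet> (x' - x) = - (\<eta> * r' / F) * (norm g)\<^sup>2"
    unfolding dx by (simp add: power2_norm_eq_inner)
  finally have r_diff: "r - r' = \<eta> * r' * (norm g)\<^sup>2 / (2 * F\<^sup>2)"
    using F by (simp add: field_simps power2_eq_square)
  then have r_eq: "r = r' * q" unfolding q_def by (simp add: algebra_simps)
  then show "r' = r / (1 + \<eta> * (norm g)\<^sup>2 / (2 * F\<^sup>2))" using q unfolding q_def by simp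
  show "\<bar>r'\<bar> \<le> \<bar>r\<bar>" using r_eq q by (simp add: abs_mult mult_le_cancel_left1)
  have "(norm (x' - x))\<^sup>2 = (\<eta> * r' / F)\<^sup>2 * (norm g)\<^sup>2"
    unfolding dx by (simp only: norm_minus_cancel norm_scaleR power_mult_distrib power2_abs)
  also have "\<dots> = 2 * \<eta> * r' * (r - r')"
    unfolding r_diff using F by (simp add: field_simps power2_eq_square)
  also have "\<dots> \<le> \<eta> * (r\<^sup>2 - r'\<^sup>2)"
  proof -
    have "2 * r' * (r - r') \<le> r\<^sup>2 - r'\<^sup>2"
      using sum_squares_ge_zero[of "r - r'" 0] by (simp add: power2_eq_square algebra_simps)
    then show ?thesis using mult_left_mono[of _ _ \<eta>] \<eta> by (fastforce simp: ac_simps)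
  qed
  finally show "(norm (x' - x))\<^sup>2 \<le> \<eta> * (r\<^sup>2 - r'\<^sup>2)" .
qed

lemma sav_energy_estimate:
  fixes x g :: "nat \<Rightarrow> 'a::real_inner" and r Fh :: "nat \<Rightarrow> real"
    and F :: "'a \<Rightarrow> real" and dF :: "'a \<Rightarrow> 'a"
  assumes descent: "\<And>y z. F y \<le> F z + dF z \<bullet> (y - z) + K / 2 * (norm (y - z))\<^sup>2"
    and K: "0 \<le> K" and l: "0 < l" and \<eta>: "0 < \<eta>" and Fh: "\<And>t. 0 < Fh t"
    and x_step: "\<And>t. x (Suc t) = x t - (\<eta> * r (Suc t) / Fh t) *\<^sub>R g t"
    and r_step: "\<And>t. r (Suc t) = r t + (1 / (2 * Fh t)) * (g t \<bullet> (x (Suc t) - x t))"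
  shows "F (x n) - r n \<le> F (x 0) - r 0 + (l + K) / 2 * \<eta> * ((r 0)\<^sup>2 - (r n)\<^sup>2)
           + (\<Sum>t<n. (norm (dF (x t) - (1 / (2 * Fh t)) *\<^sub>R g t))\<^sup>2) / (2 * l)"
proof (induction n)
  case (Suc n)
  define dx where "dx = x (Suc n) - x n"
  define e where "e = dF (x n) - (1 / (2 * Fh n)) *\<^sub>R g n"
  have "F (x (Suc n)) - r (Suc n) \<le> F (x n) - r n + e \<bullet> dx + K / 2 * (norm dx)\<^sup>2"
    using descent[of "x (Suc n)" "x n"] r_step[of n]
    unfolding e_def dx_def by (simp add: inner_diff_left)
  also have "e \<bullet> dx \<le> (norm e)\<^sup>2 / (2 * l) + l * (norm dx)\<^sup>2 / 2"
    by (rule inner_le_weighted_squares[OF l])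
  also have "(l + K) / 2 * (norm dx)\<^sup>2 \<le> (l + K) / 2 * (\<eta> * ((r n)\<^sup>2 - (r (Suc n))\<^sup>2))"
    using sav_step(2)[OF Fh \<eta> x_step r_step] l K unfolding dx_def by (intro mult_left_mono) auto
  ultimately show ?case
    using Suc.IH unfolding e_def by (simp add: algebra_simps add_divide_distrib)
qed simp

lemma sav_abs_le_initial:
  fixes x g :: "nat \<Rightarrow> 'a::real_inner" and r Fh :: "nat \<Rightarrow> real"
  assumes \<eta>: "0 < \<eta>" and Fh: "\<And>t. 0 < Fh t"
    and x_step: "\<And>t. x (Suc t) = x t - (\<eta> * r (Suc t) / Fh t) *\<^sub>R g t"
    and r_step: "\<And>t. r (Suc t) = r t + (1 / (2 * Fh t)) * (g t \<bullet> (x (Suc t) - x t))"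
  shows "\<bar>r n\<bar> \<le> \<bar>r 0\<bar>"
proof (induction n)
  case (Suc n)
  then show ?case using sav_step(3)[OF Fh \<eta> x_step r_step, of n] by linarith
qed simp

lemma normalized_gradient_error_bound:
  fixes g g' :: "'a::real_normed_vector"
  assumes a: "0 < a" and P: "a \<le> P" and Q: "a \<le> Q" and g': "(norm g')\<^sup>2 \<le> \<gamma>\<^sup>2"
  shows "(norm ((1 / (2 * sqrt P)) *\<^sub>R g' - (1 / (2 * sqrt Q)) *\<^sub>R g))\<^sup>2
         \<le> (norm (g - g'))\<^sup>2 / (2 * a) + \<gamma>\<^sup>2 * \<bar>Q - P\<bar>\<^sup>2 / (8 * a ^ 3)"
proof -
  define u v where "u = norm (g - g') / (2 * sqrt a)" and "v = \<bar>\<gamma>\<bar> * \<bar>Q - P\<bar> / (4 * sqrt a ^ 3)"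
  have "norm ((1 / (2 * sqrt P)) *\<^sub>R g' - (1 / (2 * sqrt Q)) *\<^sub>R g)
      \<le> norm (g' - g) / (2 * sqrt a) + norm g' * \<bar>P - Q\<bar> / (4 * sqrt a ^ 3)"
    using a P Q by (intro norm_diff_scaleR_inverse_sqrt_le) auto
  also have "\<dots> \<le> u + v"
    using g' abs_le_square_iff[of "norm g'" \<gamma>] a unfolding u_def v_def
    by (auto simp: norm_minus_commute abs_minus_commute intro!: divide_right_mono mult_right_mono)
  finally have "(norm ((1 / (2 * sqrt P)) *\<^sub>R g' - (1 / (2 * sqrt Q)) *\<^sub>R g))\<^sup>2 \<le> (u + v)\<^sup>2"
    by (intro power_mono) auto
  also have "\<dots> \<le> 2 * u\<^sup>2 + 2 * v\<^sup>2"
    using sum_squares_ge_zero[of "u - v" 0] by (simp add: power2_eq_square algebra_simps)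
  also have "\<dots> = (norm (g - g'))\<^sup>2 / (2 * a) + \<gamma>\<^sup>2 * \<bar>Q - P\<bar>\<^sup>2 / (8 * a ^ 3)"
  proof -
    have "(sqrt a ^ 3)\<^sup>2 = (sqrt a ^ 2) ^ 3" by (simp flip: power_mult)
    then have "(sqrt a ^ 3)\<^sup>2 = a ^ 3" using a by simp
    then show ?thesis
      using a unfolding u_def v_def by (simp add: power_mult_distrib power_divide)
  qed
  finally show ?thesis .
qed

lemma LF_nonneg:
  fixes f :: "'a::euclidean_space \<Rightarrow> real" and gradf :: "'a \<Rightarrow> 'a"
  assumes grad_lip: "\<And>y z. norm (gradf y - gradf z) \<le> L * norm (y - z)"
    and low: "\<And>y. a \<le> f y + c" and a: "0 < a"
  shows "0 \<le> LF f c L \<gamma>"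
proof -
  obtain b :: 'a where "b \<in> Basis" using nonempty_Basis by blast
  then have "0 \<le> L" using order_trans[OF norm_ge_zero grad_lip[of b 0]] by simp
  then show ?thesis
    using Fstar_pos[of a f c, OF low a] unfolding LF_def
    by (intro mult_nonneg_nonneg add_nonneg_nonneg) auto
qed

lemma sg_sav_pathwise_bound:
  fixes f :: "'a::euclidean_space \<Rightarrow> real" and gradf :: "'a \<Rightarrow> 'a"
    and fs :: "'a \<Rightarrow> 'b \<Rightarrow> real" and G :: "'a \<Rightarrow> 'b \<Rightarrow> 'a"
    and x :: "nat \<Rightarrow> 'a" and r :: "nat \<Rightarrow> real" and s :: "nat \<Rightarrow> 'b"
  assumes grad: "\<And>y. (f has_derivative (\<lambda>h. gradf y \<bullet> h)) (at y)"
    and grad_bound: "\<And>y. (norm (gradf y))\<^sup>2 \<le> \<gamma>\<^sup>2"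
    and grad_lip: "\<And>y z. norm (gradf y - gradf z) \<le> L * norm (y - z)"
    and low: "\<And>y. a \<le> f y + c" and low_s: "\<And>y s. a \<le> fs y s + c" and a: "0 < a"
    and \<eta>: "0 < \<eta>" and l: "0 < l"
    and r0: "r 0 = sqrt (f (x 0) + c)"
    and x_step: "\<And>t. x (Suc t) =
                        x t - (\<eta> * r (Suc t) / sqrt (fs (x t) (s t) + c)) *\<^sub>R G (x t) (s t)"
    and r_step: "\<And>t. r (Suc t) = r t + (1 / (2 * sqrt (fs (x t) (s t) + c))) *
                                            (G (x t) (s t) \<bullet> (x (Suc t) - x t))"
  shows "sqrt a - LF f c L \<gamma> / 2 * \<eta> * (r 0)\<^sup>2 - l * (\<eta> * (r 0)\<^sup>2 / 2)
           - (\<Sum>t<n. (norm (G (x t) (s t) - gradf (x t)))\<^sup>2 / (2 * a)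
                     + \<gamma>\<^sup>2 * \<bar>fs (x t) (s t) - f (x t)\<bar>\<^sup>2 / (8 * a ^ 3)) / (2 * l)
         \<le> r n"
proof -
  define K where "K = LF f c L \<gamma>"
  define F where "F y = sqrt (f y + c)" for y
  define dF where "dF y = (1 / (2 * F y)) *\<^sub>R gradf y" for y
  define e where "e t = dF (x t) - (1 / (2 * sqrt (fs (x t) (s t) + c))) *\<^sub>R G (x t) (s t)" for t
  have K: "0 \<le> K" unfolding K_def using LF_nonneg[OF grad_lip low a] .
  have pos: "0 < f y + c" "0 < fs y s' + c" for y s' using low[of y] low_s[of y s'] a by linarith+
  have descent: "F y \<le> F z + dF z \<bullet> (y - z) + K / 2 * (norm (y - z))\<^sup>2" for y z
  proof (rule descent_lemma)
    show "(F has_derivative (\<lambda>h. dF w \<bullet> h)) (at w)" for w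
      unfolding F_def dF_def by (rule has_derivative_sqrt_shift[where gradf=gradf, OF grad pos(1)])
    show "norm (dF w - dF w') \<le> K * norm (w - w')" for w w'
      unfolding F_def dF_def K_def
      by (rule gradient_sqrt_shift_lipschitz[OF grad grad_bound grad_lip low a])
  qed
  have energy: "F (x n) - r n \<le> F (x 0) - r 0 + (l + K) / 2 * \<eta> * ((r 0)\<^sup>2 - (r n)\<^sup>2)
                  + (\<Sum>t<n. (norm (e t))\<^sup>2) / (2 * l)"
    unfolding e_def using pos(2)
    by (intro sav_energy_estimate[where F=F and dF=dF and Fh="\<lambda>t. sqrt (fs (x t) (s t) + c)",
                                  OF descent K l \<eta> _ x_step r_step]) auto
  have "(norm (e t))\<^sup>2 \<le> (norm (G (x t) (s t) - gradf (x t)))\<^sup>2 / (2 * a)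
                         + \<gamma>\<^sup>2 * \<bar>fs (x t) (s t) - f (x t)\<bar>\<^sup>2 / (8 * a ^ 3)" for t
    using normalized_gradient_error_bound[OF a low[of "x t"] low_s[of "x t" "s t"]
                                          grad_bound[of "x t"], of "G (x t) (s t)"]
    unfolding e_def dF_def F_def by simp
  then have "(\<Sum>t<n. (norm (e t))\<^sup>2) / (2 * l)
      \<le> (\<Sum>t<n. (norm (G (x t) (s t) - gradf (x t)))\<^sup>2 / (2 * a)
                 + \<gamma>\<^sup>2 * \<bar>fs (x t) (s t) - f (x t)\<bar>\<^sup>2 / (8 * a ^ 3)) / (2 * l)"
    using l by (intro divide_right_mono sum_mono) auto
  moreover have "(l + K) / 2 * \<eta> * ((r 0)\<^sup>2 - (r n)\<^sup>2) \<le> (l + K) / 2 * \<eta> * (r 0)\<^sup>2"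
    using l K \<eta> by (intro mult_left_mono) auto
  moreover have "sqrt a \<le> F (x n)" unfolding F_def using low by simp
  moreover have "(l + K) / 2 * \<eta> * (r 0)\<^sup>2 = K / 2 * \<eta> * (r 0)\<^sup>2 + l * (\<eta> * (r 0)\<^sup>2 / 2)"
    by (simp add: field_simps)
  ultimately show ?thesis using energy r0 unfolding K_def F_def by linarith
qed

lemma AM_GM_tradeoff_le:
  fixes A p q X :: real
  assumes p: "0 < p" and q: "0 \<le> q"
    and H: "\<And>l. 0 < l \<Longrightarrow> A - l * p - q / l \<le> X"
  shows "A - 2 * sqrt (p * q) \<le> X"
proof (rule field_le_epsilon)
  fix e :: real assume e: "0 < e"
  define d where "d = e / sqrt p"
  define l where "l = (sqrt q + d) / sqrt p"
  have d: "0 < d" unfolding d_def using e p by simp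
  have l: "0 < l" unfolding l_def using d q p by (simp add: add_nonneg_pos)
  have "l * p = sqrt (p * q) + e"
    using p unfolding l_def d_def by (simp add: field_simps real_sqrt_mult)
  moreover have "q / l \<le> sqrt (p * q)"
  proof -
    have "q \<le> sqrt q * (sqrt q + d)" using q d by (simp add: distrib_left)
    then have "q / (sqrt q + d) \<le> sqrt q" using q d by (simp add: divide_le_eq add_nonneg_pos)
    then have "sqrt p * (q / (sqrt q + d)) \<le> sqrt p * sqrt q" using p by (intro mult_left_mono) auto
    moreover have "q / l = sqrt p * (q / (sqrt q + d))" unfolding l_def by simp
    ultimately show ?thesis by (simp add: real_sqrt_mult)
  qed
  ultimately show "A - 2 * sqrt (p * q) \<le> X + e" using H[OF l] by linarith
qed

lemma borel_measurable_case_prod_comp: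
  assumes g: "(\<lambda>(y, s). g y s) \<in> borel_measurable (borel \<Otimes>\<^sub>M S)"
    and X: "X \<in> borel_measurable M" and Y: "Y \<in> measurable M S"
  shows "(\<lambda>\<omega>. g (X \<omega>) (Y \<omega>)) \<in> borel_measurable M"
  using measurable_compose[OF measurable_Pair[OF X Y] g] by simp

lemma sigma_finite_subalgebra_hist_alg:
  assumes prob: "prob_space M" and xi: "\<And>i. \<xi> i \<in> measurable M S"
  shows "sigma_finite_subalgebra M (hist_alg M S \<xi> t)"
proof -
  interpret prob_space M by (rule prob)
  let ?A = "{\<xi> i -` A \<inter> space M | i A. i < t \<and> A \<in> sets S}"
  have "?A \<subseteq> Pow (space M)" by auto
  moreover have "?A \<subseteq> sets M" using xi by (auto intro: measurable_sets)
  ultimately have "subalgebra M (hist_alg M S \<xi> t)"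
    unfolding hist_alg_def subalgebra_def by (simp add: sets.sigma_sets_subset)
  then have "finite_measure_subalgebra M (hist_alg M S \<xi> t)"
    by unfold_locales
  then show ?thesis by (rule finite_measure_subalgebra_is_sigma_finite)
qed

lemma (in prob_space) integral_le_of_real_cond_exp_le:
  assumes "sigma_finite_subalgebra M F" and h: "integrable M h"
    and bound: "AE \<omega> in M. real_cond_exp M F h \<omega> \<le> b"
  shows "expectation h \<le> b"
proof -
  interpret sigma_finite_subalgebra M F by fact
  have "expectation h = expectation (real_cond_exp M F h)"
    using real_cond_exp_int(2)[OF h] by simp
  also have "\<dots> \<le> expectation (\<lambda>_. b)"
    using real_cond_exp_int(1)[OF h] bound by (intro integral_mono_AE) auto
  finally show ?thesis by (simp add: prob_space)
qed

lemma (in prob_space) expectation_ge_of_pathwise_bound: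
  fixes R :: "'a \<Rightarrow> real" and W :: "nat \<Rightarrow> 'a \<Rightarrow> real"
  assumes R: "integrable M R" and W: "\<And>t. integrable M (W t)"
    and EW: "\<And>t. expectation (W t) \<le> \<kappa>" and \<kappa>: "0 \<le> \<kappa>" and p: "0 < p"
    and bound: "\<And>\<omega> l. \<omega> \<in> space M \<Longrightarrow> 0 < l \<Longrightarrow> A - l * p - (\<Sum>t<n. W t \<omega>) / (2 * l) \<le> R \<omega>"
  shows "A - sqrt (2 * p * (n * \<kappa>)) \<le> expectation R"
proof -
  have "A - l * p - (n * \<kappa> / 2) / l \<le> expectation R" if l: "0 < l" for l
  proof -
    have "A - l * p - (n * \<kappa>) / (2 * l) \<le> A - l * p - (\<Sum>t<n. expectation (W t)) / (2 * l)"
      using sum_mono[of "{..<n}" "\<lambda>t. expectation (W t)" "\<lambda>_. \<kappa>"] EW l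
      by (simp add: divide_right_mono)
    also have "\<dots> = expectation (\<lambda>\<omega>. A - l * p - (\<Sum>t<n. W t \<omega>) / (2 * l))"
      using W by (simp add: prob_space Bochner_Integration.integral_sum)
    also have "\<dots> \<le> expectation R"
      using W R bound l by (intro integral_mono) auto
    finally show ?thesis by simp
  qed
  from AM_GM_tradeoff_le[OF p _ this] \<kappa> have "A - 2 * sqrt (p * (n * \<kappa> / 2)) \<le> expectation R"
    by simp
  also have "2 * sqrt (p * (n * \<kappa> / 2)) = sqrt (2 * p * (n * \<kappa>))"
    using real_sqrt_mult[of 4 "p * (n * \<kappa> / 2)"] by (simp add: mult_ac)
  finally show ?thesis .
qed

locale sg_sav_iteration = prob_space M
  for M :: "'w measure" and S :: "'b measure" and \<xi> :: "nat \<Rightarrow> 'w \<Rightarrow> 'b"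
    and fs :: "'a::euclidean_space \<Rightarrow> 'b \<Rightarrow> real" and G :: "'a \<Rightarrow> 'b \<Rightarrow> 'a"
    and x :: "nat \<Rightarrow> 'w \<Rightarrow> 'a" and r :: "nat \<Rightarrow> 'w \<Rightarrow> real" and x0 :: 'a and r0 c \<eta> :: real +
  assumes xi_meas: "\<And>t. \<xi> t \<in> measurable M S"
    and fs_meas: "(\<lambda>(y, s). fs y s) \<in> borel_measurable (borel \<Otimes>\<^sub>M S)"
    and G_meas: "(\<lambda>(y, s). G y s) \<in> borel_measurable (borel \<Otimes>\<^sub>M S)"
    and pos: "\<And>y s. 0 < fs y s + c" and \<eta>: "0 < \<eta>"
    and x_init: "\<And>\<omega>. \<omega> \<in> space M \<Longrightarrow> x 0 \<omega> = x0"
    and r_init: "\<And>\<omega>. \<omega> \<in> space M \<Longrightarrow> r 0 \<omega> = r0"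
    and x_step: "\<And>t \<omega>. \<omega> \<in> space M \<Longrightarrow>
        x (Suc t) \<omega> = x t \<omega> - (\<eta> * r (Suc t) \<omega> / sqrt (fs (x t \<omega>) (\<xi> t \<omega>) + c))
                                    *\<^sub>R G (x t \<omega>) (\<xi> t \<omega>)"
    and r_step: "\<And>t \<omega>. \<omega> \<in> space M \<Longrightarrow>
        r (Suc t) \<omega> = r t \<omega> + (1 / (2 * sqrt (fs (x t \<omega>) (\<xi> t \<omega>) + c))) *
                         (G (x t \<omega>) (\<xi> t \<omega>) \<bullet> (x (Suc t) \<omega> - x t \<omega>))"
begin

lemma measurable_iterates: "x t \<in> borel_measurable M \<and> r t \<in> borel_measurable M"
proof (induction t)
  case 0
  show ?case
    using measurable_cong[of M "x 0" "\<lambda>_. x0"] measurable_cong[of M "r 0" "\<lambda>_. r0"] x_init r_init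
    by simp
next
  case (Suc t)
  then have xt[measurable]: "x t \<in> borel_measurable M" and [measurable]: "r t \<in> borel_measurable M"
    by auto
  define Fh where "Fh \<omega> = sqrt (fs (x t \<omega>) (\<xi> t \<omega>) + c)" for \<omega>
  define g where "g \<omega> = G (x t \<omega>) (\<xi> t \<omega>)" for \<omega>
  have [measurable]: "g \<in> borel_measurable M"
    unfolding g_def by (rule borel_measurable_case_prod_comp[OF G_meas xt xi_meas])
  have [measurable]: "(\<lambda>\<omega>. fs (x t \<omega>) (\<xi> t \<omega>)) \<in> borel_measurable M"
    by (rule borel_measurable_case_prod_comp[OF fs_meas xt xi_meas])
  have [measurable]: "Fh \<in> borel_measurable M" unfolding Fh_def by measurable
  have r_iff: "r (Suc t) \<in> borel_measurable M \<longleftrightarrow>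
        (\<lambda>\<omega>. r t \<omega> / (1 + \<eta> * (norm (g \<omega>))\<^sup>2 / (2 * (Fh \<omega>)\<^sup>2))) \<in> borel_measurable M"
  proof (rule measurable_cong)
    fix \<omega> assume \<omega>: "\<omega> \<in> space M"
    show "r (Suc t) \<omega> = r t \<omega> / (1 + \<eta> * (norm (g \<omega>))\<^sup>2 / (2 * (Fh \<omega>)\<^sup>2))"
      unfolding Fh_def g_def using pos[of "x t \<omega>" "\<xi> t \<omega>"]
      by (intro sav_step(1)[OF _ \<eta> x_step[OF \<omega>] r_step[OF \<omega>]]) simp
  qed
  have r'[measurable]: "r (Suc t) \<in> borel_measurable M" unfolding r_iff by measurable
  have x_iff: "x (Suc t) \<in> borel_measurable M \<longleftrightarrow>
        (\<lambda>\<omega>. x t \<omega> - (\<eta> * r (Suc t) \<omega> / Fh \<omega>) *\<^sub>R g \<omega>) \<in> borel_measurable M"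
    unfolding Fh_def g_def by (rule measurable_cong) (rule x_step)
  have "x (Suc t) \<in> borel_measurable M" unfolding x_iff by measurable
  with r' show ?case by blast
qed

lemma integrable_r: "integrable M (r t)"
proof (rule integrable_const_bound[where B="\<bar>r0\<bar>"])
  show "AE \<omega> in M. norm (r t \<omega>) \<le> \<bar>r0\<bar>"
  proof (rule AE_I2)
    fix \<omega> assume \<omega>: "\<omega> \<in> space M"
    show "norm (r t \<omega>) \<le> \<bar>r0\<bar>"
      using sav_abs_le_initial[where x="\<lambda>t. x t \<omega>" and r="\<lambda>t. r t \<omega>" and g="\<lambda>t. G (x t \<omega>) (\<xi> t \<omega>)"
                                and Fh="\<lambda>t. sqrt (fs (x t \<omega>) (\<xi> t \<omega>) + c)",
                               OF \<eta> _ x_step[OF \<omega>] r_step[OF \<omega>]] pos r_init[OF \<omega>]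
      by simp
  qed
qed (use measurable_iterates in blast)

end

lemma (in prob_space) sg_sav_noise_bound:
  fixes X :: "'a \<Rightarrow> 'c::euclidean_space" and Y :: "'a \<Rightarrow> 'b" and \<gamma> :: real
  assumes Fa: "sigma_finite_subalgebra M Fa"
    and X: "X \<in> borel_measurable M" and Y: "Y \<in> measurable M S"
    and fs_meas: "(\<lambda>(y, s). fs y s) \<in> borel_measurable (borel \<Otimes>\<^sub>M S)"
    and f_meas: "f \<in> borel_measurable borel"
    and fs_dev: "\<And>y s. \<bar>fs y s - f y\<bar> \<le> \<Delta>"
    and D_int: "integrable M (\<lambda>\<omega>. (norm (G (X \<omega>) (Y \<omega>) - gradf (X \<omega>)))\<^sup>2)"
    and D_ce: "AE \<omega> in M. real_cond_exp M Fa (\<lambda>\<omega>. (norm (G (X \<omega>) (Y \<omega>) - gradf (X \<omega>)))\<^sup>2) \<omega> \<le> \<sigma>\<^sub>0\<^sup>2"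
    and V_ce: "AE \<omega> in M. real_cond_exp M Fa (\<lambda>\<omega>. \<bar>fs (X \<omega>) (Y \<omega>) - f (X \<omega>)\<bar>\<^sup>2) \<omega> \<le> \<sigma>\<^sub>f\<^sup>2"
    and a: "0 < a"
  defines "W \<equiv> \<lambda>\<omega>. (norm (G (X \<omega>) (Y \<omega>) - gradf (X \<omega>)))\<^sup>2 / (2 * a)
                    + \<gamma>\<^sup>2 * \<bar>fs (X \<omega>) (Y \<omega>) - f (X \<omega>)\<bar>\<^sup>2 / (8 * a ^ 3)"
  shows "integrable M W" and "expectation W \<le> \<gamma>\<^sup>2 / (8 * a ^ 3) * \<sigma>\<^sub>f\<^sup>2 + 1 / (2 * a) * \<sigma>\<^sub>0\<^sup>2"
proof -
  define V where "V \<omega> = \<bar>fs (X \<omega>) (Y \<omega>) - f (X \<omega>)\<bar>\<^sup>2" for \<omega>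
  have V_int: "integrable M V"
  proof (rule integrable_const_bound[where B="\<Delta>\<^sup>2"])
    show "V \<in> borel_measurable M"
      unfolding V_def
      using borel_measurable_case_prod_comp[OF fs_meas X Y] measurable_compose[OF X f_meas]
      by measurable
    show "AE \<omega> in M. norm (V \<omega>) \<le> \<Delta>\<^sup>2"
    proof (rule AE_I2)
      fix \<omega>
      have "\<bar>fs (X \<omega>) (Y \<omega>) - f (X \<omega>)\<bar>\<^sup>2 \<le> \<Delta>\<^sup>2" using fs_dev by (intro power_mono) auto
      then show "norm (V \<omega>) \<le> \<Delta>\<^sup>2" by (simp add: V_def)
    qed
  qed
  have W_eq: "W = (\<lambda>\<omega>. (norm (G (X \<omega>) (Y \<omega>) - gradf (X \<omega>)))\<^sup>2 / (2 * a) + \<gamma>\<^sup>2 * V \<omega> / (8 * a ^ 3))"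
    unfolding W_def V_def ..
  show "integrable M W"
    unfolding W_eq using D_int V_int
    by (intro Bochner_Integration.integrable_add integrable_divide_zero integrable_mult_right)
  have "expectation W = expectation (\<lambda>\<omega>. (norm (G (X \<omega>) (Y \<omega>) - gradf (X \<omega>)))\<^sup>2) / (2 * a)
                          + \<gamma>\<^sup>2 * expectation V / (8 * a ^ 3)"
    unfolding W_eq using D_int V_int by simp
  also have "\<dots> \<le> \<sigma>\<^sub>0\<^sup>2 / (2 * a) + \<gamma>\<^sup>2 * \<sigma>\<^sub>f\<^sup>2 / (8 * a ^ 3)"
  proof -
    have "expectation V \<le> \<sigma>\<^sub>f\<^sup>2"
      by (rule integral_le_of_real_cond_exp_le[OF Fa V_int])
         (use V_ce in \<open>simp only: V_def[abs_def]\<close>)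
    then show ?thesis
      using integral_le_of_real_cond_exp_le[OF Fa D_int D_ce] a
      by (intro add_mono divide_right_mono mult_left_mono) auto
  qed
  finally show "expectation W \<le> \<gamma>\<^sup>2 / (8 * a ^ 3) * \<sigma>\<^sub>f\<^sup>2 + 1 / (2 * a) * \<sigma>\<^sub>0\<^sup>2" by simp
qed

theorem theorem4p3:
  fixes M :: "'w measure" and S :: "'b measure"
    and f :: "'a::euclidean_space \<Rightarrow> real" and gradf :: "'a \<Rightarrow> 'a"
    and fs :: "'a \<Rightarrow> 'b \<Rightarrow> real" and G :: "'a \<Rightarrow> 'b \<Rightarrow> 'a"
    and \<xi> :: "nat \<Rightarrow> 'w \<Rightarrow> 'b"
    and x :: "nat \<Rightarrow> 'w \<Rightarrow> 'a" and r :: "nat \<Rightarrow> 'w \<Rightarrow> real"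
    and x0 :: 'a and c a B \<sigma>\<^sub>0 \<sigma>\<^sub>f \<gamma> L \<eta> :: real and T :: nat
  assumes prob: "prob_space M"
    and grad: "\<And>y. (f has_derivative (\<lambda>h. gradf y \<bullet> h)) (at y)"
    and grad_cont: "continuous_on UNIV gradf"
    and c_nonneg: "c \<ge> 0"
    and fstar: "(INF y. f y) > - c"
    and xi_meas: "\<And>t. \<xi> t \<in> measurable M S"
    and fs_meas: "(\<lambda>(y, s). fs y s) \<in> borel_measurable (borel \<Otimes>\<^sub>M S)"
    and G_meas: "(\<lambda>(y, s). G y s) \<in> borel_measurable (borel \<Otimes>\<^sub>M S)"
    and x_init: "\<And>\<omega>. \<omega> \<in> space M \<Longrightarrow> x 0 \<omega> = x0"
    and r_init: "\<And>\<omega>. \<omega> \<in> space M \<Longrightarrow> r 0 \<omega> = sqrt (f x0 + c)"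
    and x_step: "\<And>t \<omega>. \<omega> \<in> space M \<Longrightarrow>
        x (Suc t) \<omega> = x t \<omega> - (\<eta> * r (Suc t) \<omega> / sqrt (fs (x t \<omega>) (\<xi> t \<omega>) + c)) *\<^sub>R G (x t \<omega>) (\<xi> t \<omega>)"
    and r_step: "\<And>t \<omega>. \<omega> \<in> space M \<Longrightarrow>
        r (Suc t) \<omega> = r t \<omega> + (1 / (2 * sqrt (fs (x t \<omega>) (\<xi> t \<omega>) + c))) *
                         (G (x t \<omega>) (\<xi> t \<omega>) \<bullet> (x (Suc t) \<omega> - x t \<omega>))"
    and A1: "prob_space.indep_vars M (\<lambda>_. S) \<xi> UNIV"
    and A2_G: "\<And>t b. b \<in> Basis \<Longrightarrow> AE \<omega> in M.
        real_cond_exp M (hist_alg M S \<xi> t) (\<lambda>\<omega>. G (x t \<omega>) (\<xi> t \<omega>) \<bullet> b) \<omega> = gradf (x t \<omega>) \<bullet> b"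
    and A2_f: "\<And>t. AE \<omega> in M.
        real_cond_exp M (hist_alg M S \<xi> t) (\<lambda>\<omega>. fs (x t \<omega>) (\<xi> t \<omega>)) \<omega> = f (x t \<omega>)"
    and A3_int: "\<And>t. integrable M (\<lambda>\<omega>. (norm (G (x t \<omega>) (\<xi> t \<omega>) - gradf (x t \<omega>)))\<^sup>2)"
    and A3: "\<And>t. AE \<omega> in M.
        real_cond_exp M (hist_alg M S \<xi> t) (\<lambda>\<omega>. (norm (G (x t \<omega>) (\<xi> t \<omega>) - gradf (x t \<omega>)))\<^sup>2) \<omega> \<le> \<sigma>\<^sub>0\<^sup>2"
    and a_pos: "0 < a" and a_le_B: "a \<le> B"
    and A4_f: "\<And>y. a \<le> f y + c \<and> f y + c \<le> B"
    and A4_fs: "\<And>y s. a \<le> fs y s + c \<and> fs y s + c \<le> B"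
    and A5: "\<And>y. (norm (gradf y))\<^sup>2 \<le> \<gamma>\<^sup>2"
    and A6: "\<And>y z. norm (gradf y - gradf z) \<le> L * norm (y - z)"
    and sigf_nonneg: "0 \<le> \<sigma>\<^sub>f"
    and var_f: "\<And>t. AE \<omega> in M.
        real_cond_exp M (hist_alg M S \<xi> t) (\<lambda>\<omega>. \<bar>fs (x t \<omega>) (\<xi> t \<omega>) - f (x t \<omega>)\<bar>\<^sup>2) \<omega> \<le> \<sigma>\<^sub>f\<^sup>2"
    and T_ge: "T \<ge> 1"
    and eta_pos: "\<eta> > 0"
    and lr: "sqrt (f x0 + c) * sqrt (real T * (\<gamma>\<^sup>2 / (8 * a ^ 3) * \<sigma>\<^sub>f\<^sup>2 + 1 / (2 * a) * \<sigma>\<^sub>0\<^sup>2)) * sqrt \<eta>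
             + LF f c L \<gamma> * (sqrt (f x0 + c))\<^sup>2 / 2 * \<eta>
             + (\<sigma>\<^sub>f / (2 * sqrt a) - sqrt a / 2) \<le> 0"
  shows "prob_space.expectation M (r T) \<ge> sqrt a / 2 \<and> sqrt a / 2 > 0"
proof -
  have low: "\<And>y. a \<le> f y + c" and low_s: "\<And>y s. a \<le> fs y s + c" using A4_f A4_fs by auto
  have pos: "0 < fs y s + c" for y s using low_s[of y s] a_pos by linarith
  interpret sg_sav_iteration M S \<xi> fs G x r x0 "sqrt (f x0 + c)" c \<eta>
    by (intro sg_sav_iteration.intro sg_sav_iteration_axioms.intro prob)
       (fact xi_meas fs_meas G_meas pos eta_pos x_init r_init x_step r_step)+
  define K r0 \<kappa> where "K = LF f c L \<gamma>" and "r0 = sqrt (f x0 + c)"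
    and "\<kappa> = \<gamma>\<^sup>2 / (8 * a ^ 3) * \<sigma>\<^sub>f\<^sup>2 + 1 / (2 * a) * \<sigma>\<^sub>0\<^sup>2"
  define W where "W t \<omega> = (norm (G (x t \<omega>) (\<xi> t \<omega>) - gradf (x t \<omega>)))\<^sup>2 / (2 * a)
    + \<gamma>\<^sup>2 * \<bar>fs (x t \<omega>) (\<xi> t \<omega>) - f (x t \<omega>)\<bar>\<^sup>2 / (8 * a ^ 3)" for t \<omega>
  have r0: "0 < r0" unfolding r0_def using low[of x0] a_pos by simp
  have f_meas: "f \<in> borel_measurable borel"
    using has_derivative_continuous[OF grad]
    by (intro borel_measurable_continuous_onI continuous_at_imp_continuous_on) auto
  have fs_dev: "\<bar>fs y s - f y\<bar> \<le> B - a" for y s using A4_f[of y] A4_fs[of y s] by linarith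
  have W_int: "integrable M (W t)" and EW: "expectation (W t) \<le> \<kappa>" for t
    using sg_sav_noise_bound[OF sigma_finite_subalgebra_hist_alg[OF prob xi_meas]
        measurable_iterates[THEN conjunct1] xi_meas fs_meas f_meas fs_dev A3_int A3 var_f a_pos]
    unfolding W_def \<kappa>_def by auto
  have path: "sqrt a - K / 2 * \<eta> * r0\<^sup>2 - l * (\<eta> * r0\<^sup>2 / 2) - (\<Sum>t<T. W t \<omega>) / (2 * l) \<le> r T \<omega>"
    if \<omega>: "\<omega> \<in> space M" and l: "0 < l" for \<omega> l
    using sg_sav_pathwise_bound[where x="\<lambda>t. x t \<omega>" and r="\<lambda>t. r t \<omega>" and s="\<lambda>t. \<xi> t \<omega>",
                                OF grad A5 A6 low low_s a_pos eta_pos l _ x_step[OF \<omega>] r_step[OF \<omega>]]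
      x_init[OF \<omega>] r_init[OF \<omega>]
    unfolding W_def K_def r0_def by simp
  have "sqrt a - K / 2 * \<eta> * r0\<^sup>2 - sqrt (2 * (\<eta> * r0\<^sup>2 / 2) * (T * \<kappa>)) \<le> expectation (r T)"
    using a_pos eta_pos r0
    by (intro expectation_ge_of_pathwise_bound[OF integrable_r W_int EW _ _ path])
       (auto simp: \<kappa>_def)
  also have "sqrt (2 * (\<eta> * r0\<^sup>2 / 2) * (T * \<kappa>)) = r0 * sqrt (T * \<kappa>) * sqrt \<eta>"
    using r0 by (simp add: real_sqrt_mult)
  finally have "sqrt a - K / 2 * \<eta> * r0\<^sup>2 - r0 * sqrt (T * \<kappa>) * sqrt \<eta> \<le> expectation (r T)" .
  moreover have "0 \<le> \<sigma>\<^sub>f / (2 * sqrt a)" and "K * r0\<^sup>2 / 2 * \<eta> = K / 2 * \<eta> * r0\<^sup>2"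
    using sigf_nonneg a_pos by simp_all
  ultimately have "sqrt a / 2 \<le> expectation (r T)"
    using lr unfolding r0_def[symmetric] K_def[symmetric] \<kappa>_def[symmetric] by linarith
  then show ?thesis using a_pos by simp
qed

end
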